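(* Let $q$ be a power of an odd prime. Then in ${\rm PG}(4,q)$ there exist a set $\mathcal L$ of $q^3+1$ pairwise skew lines and a set $\mathcal P$ of $q^3+1$ planes any two of which intersect in exactly one point, such that no line of $\mathcal L$ is contained in a plane of $\mathcal P$. *)

theory Defs
  imports "HOL-Analysis.Analysis"
begin

text \<open>PG(4,F) is modelled via the vector space F^5 (type 'a ^ 5).
  A projective subspace of projective dimension d is a linear subspace of
  vector-space dimension d+1. Points: dim 1, lines: dim 2, planes: dim 3.\<close>

definition pg_subspace_of_dim :: "nat \<Rightarrow> ('a::field ^ 5) set \<Rightarrow> bool" where
  "pg_subspace_of_dim d S \<longleftrightarrow> vec.subspace S \<and> vec.dim S = d + 1"

definition pg4_line :: "('a::field ^ 5) set \<Rightarrow> bool" where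
  "pg4_line L \<longleftrightarrow> pg_subspace_of_dim 1 L"

definition pg4_plane :: "('a::field ^ 5) set \<Rightarrow> bool" where
  "pg4_plane P \<longleftrightarrow> pg_subspace_of_dim 2 P"

text \<open>Two lines are skew iff they share no projective point, i.e. the
  underlying subspaces meet only in the zero vector.\<close>
definition pg_skew :: "('a::field ^ 5) set \<Rightarrow> ('a ^ 5) set \<Rightarrow> bool" where
  "pg_skew L M \<longleftrightarrow> L \<inter> M = {0}"

text \<open>Two subspaces meet in exactly one projective point iff their
  intersection is a 1-dimensional linear subspace.\<close>
definition pg_meet_in_one_point :: "('a::field ^ 5) set \<Rightarrow> ('a ^ 5) set \<Rightarrow> bool" where
  "pg_meet_in_one_point P Q \<longleftrightarrow> pg_subspace_of_dim 0 (P \<inter> Q)"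

end

theory Submission
  imports Defs
begin

(*
  Fix a 3 \<times> 3 matrix K over F = GF(q) without eigenvalues (the companion matrix of a cubic
  without roots), so that every pencil s I + t K with (s, t) \<noteq> (0, 0) is invertible, and write
  the points of PG(4, q) as (s, t, w) with w \<in> F\<^sup>3.

  The q\<^sup>3 lines {(s, t, (s I + t K) w)} are pairwise skew. For a fixed e \<noteq> 0, the q of them
  with w \<in> span {e}, together with the line {(0, 0, a e + b K e)}, form a regulus; the q + 1
  lines {(s d\<^sub>1, s d\<^sub>2, t (d\<^sub>1 I + d\<^sub>2 K) e)} of the opposite regulus cover the same points, so
  switching to them keeps the lines skew and gains one line.

  The planes are P\<^sub>u = {(u \<cdot> y, u \<cdot> (y + K y), y)} for u \<in> F\<^sup>3 and {(r, s, t f)} with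
  f \<notin> span {e, K e}. Two planes P\<^sub>u, P\<^sub>v meet where y is orthogonal to u - v and to
  K\<^sup>T (u - v), a single point since K\<^sup>T has no eigenvalue either. If P\<^sub>u contained a line of the
  first kind, then u \<cdot> w = 1 while u \<cdot> (w + K w) = u \<cdot> K w = 0; this is why the second
  coordinate uses y + K y.
*)

section \<open>Matrices without eigenvalues\<close>

definition no_eigenvalue :: "'a::field^'n^'n \<Rightarrow> bool" where
  "no_eigenvalue K \<longleftrightarrow> (\<forall>l v. K *v v = l *s v \<longrightarrow> v = 0)"

lemma matrix_vector_mul_mat: "mat l *v v = l *s v"
proof -
  have "(\<Sum>j\<in>UNIV. (if i = j then l else 0) * v $ j) = l * v $ i" for i
    by (simp add: if_distrib[of "\<lambda>x. x * _"] cong: if_cong)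
  then show ?thesis by (simp add: vec_eq_iff matrix_vector_mult_def mat_def)
qed

lemma transpose_diff: "transpose (A - B) = transpose A - transpose (B :: 'a::ab_group_add^'n^'m)"
  by (simp add: transpose_def vec_eq_iff)

lemma no_eigenvalue_iff_left_invertible:
  "no_eigenvalue K \<longleftrightarrow> (\<forall>l. \<exists>B. B ** (K - mat l) = mat 1)"
  by (simp add: no_eigenvalue_def matrix_left_invertible_ker matrix_vector_mult_diff_rdistrib
      matrix_vector_mul_mat)

lemma no_eigenvalue_transpose:
  assumes "no_eigenvalue K"
  shows "no_eigenvalue (transpose K)"
  unfolding no_eigenvalue_iff_left_invertible
proof
  fix l
  from assms obtain B where "B ** (K - mat l) = mat 1"
    unfolding no_eigenvalue_iff_left_invertible by blast
  then have "(K - mat l) ** B = mat 1"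
    by (simp add: matrix_left_right_inverse)
  then have "transpose B ** transpose (K - mat l) = mat 1"
    by (metis matrix_transpose_mul transpose_mat)
  then show "\<exists>B. B ** (transpose K - mat l) = mat 1"
    by (auto simp: transpose_diff transpose_mat)
qed

lemma no_eigenvalue_pencil_eq_0:
  assumes "no_eigenvalue K" and "s *s v + t *s (K *v v) = 0" and "v \<noteq> 0"
  shows "s = 0 \<and> t = 0"
proof (cases "t = 0")
  case True
  then show ?thesis using assms(2,3) by simp
next
  case False
  then have "K *v v = (- s / t) *s v"
    using assms(2) by (simp add: vec_eq_iff field_simps) (metis add_eq_0_iff)
  then show ?thesis using assms(1,3) unfolding no_eigenvalue_def by blast
qed

lemma finite_field_rootless_cubic:
  "\<exists>a b c :: 'a::{field,finite}. \<forall>r. r^3 + a * r^2 + b * r + c \<noteq> 0"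
proof (rule ccontr)
  assume "\<not> ?thesis"
  then have root: "\<exists>r. r^3 + a * r^2 + b * r + c = 0" for a b c :: 'a
    by auto
  define g :: "'a \<times> 'a \<times> 'a \<Rightarrow> 'a \<times> 'a \<times> 'a" where
    "g = (\<lambda>(r, a, b). (a, b, - (r^3 + a * r^2 + b * r)))"
  have "surj g"
    unfolding surj_def
  proof
    fix x :: "'a \<times> 'a \<times> 'a"
    obtain a b c where x: "x = (a, b, c)" by (cases x)
    from root obtain r where "r^3 + a * r^2 + b * r + c = 0" by blast
    then have "c = - (r^3 + a * r^2 + b * r)" by (metis neg_eq_iff_add_eq_0)
    then have "x = g (r, a, b)" by (simp add: g_def x)
    then show "\<exists>y. x = g y" ..
  qed
  then have "inj g" by (simp add: finite_UNIV_surj_inj)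
  moreover have "g (0, -1, 0) = g (1, -1, 0)" by (simp add: g_def)
  ultimately have "((0::'a), (-1::'a), (0::'a)) = (1, -1, 0)" by (rule injD)
  then show False by simp
qed

definition companion3 :: "'a::comm_ring_1 \<Rightarrow> 'a \<Rightarrow> 'a \<Rightarrow> 'a^3^3" where
  "companion3 a b c = vector [vector [0, 0, - c], vector [1, 0, - b], vector [0, 1, - a]]"

lemma companion3_mult:
  "companion3 a b c *v w = vector [- c * w$3, w$1 - b * w$3, w$2 - a * w$3]"
  by (simp add: vec_eq_iff forall_3 companion3_def matrix_vector_mult_def sum_3)

lemma no_eigenvalue_companion3:
  fixes a b c :: "'a::field"
  assumes rootless: "\<forall>r. r^3 + a * r^2 + b * r + c \<noteq> 0"
  shows "no_eigenvalue (companion3 a b c)"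
  unfolding no_eigenvalue_def
proof (intro allI impI)
  fix l and v :: "'a^3"
  assume "companion3 a b c *v v = l *s v"
  then have e1: "- c * v$3 = l * v$1" and e2: "v$1 - b * v$3 = l * v$2"
    and e3: "v$2 - a * v$3 = l * v$3"
    by (simp_all add: companion3_mult vec_eq_iff forall_3)
  from e2 e3 have v12: "v$2 = (l + a) * v$3" "v$1 = (l^2 + a * l + b) * v$3"
    by (simp_all add: algebra_simps power2_eq_square eq_diff_eq)
  with e1 have "(l^3 + a * l^2 + b * l + c) * v$3 = 0"
    by algebra
  with rootless have "v$3 = 0" by simp
  with v12 show "v = 0" by (simp add: vec_eq_iff forall_3)
qed

section \<open>Scalar and cross products\<close>

definition scalar_prod :: "'a::comm_semiring_1^'n \<Rightarrow> 'a^'n \<Rightarrow> 'a" where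
  "scalar_prod x y = (\<Sum>i\<in>UNIV. x $ i * y $ i)"

lemma scalar_prod_add_right: "scalar_prod x (y + z) = scalar_prod x y + scalar_prod x z"
  by (simp add: scalar_prod_def distrib_left sum.distrib)

lemma scalar_prod_scale_right: "scalar_prod x (k *s y) = k * scalar_prod x y"
  by (simp add: scalar_prod_def sum_distrib_left ac_simps)

lemma scalar_prod_diff_left:
  "scalar_prod (x - y) z = scalar_prod x z - scalar_prod (y :: 'a::comm_ring_1^'n) z"
  by (simp add: scalar_prod_def left_diff_distrib sum_subtractf)

lemma scalar_prod_matrix_vector:
  "scalar_prod x (A *v y) = scalar_prod (transpose A *v x) y"
  by (simp add: scalar_prod_def matrix_vector_mult_def transpose_def sum_distrib_left
      sum_distrib_right ac_simps) (rule sum.swap)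

lemma scalar_prod_3:
  fixes x y :: "'a::comm_semiring_1^3"
  shows "scalar_prod x y = x$1 * y$1 + x$2 * y$2 + x$3 * y$3"
  by (simp add: scalar_prod_def sum_3)

definition cross3 :: "'a::comm_ring_1^3 \<Rightarrow> 'a^3 \<Rightarrow> 'a^3" where
  "cross3 x y = vector [x$2 * y$3 - x$3 * y$2, x$3 * y$1 - x$1 * y$3, x$1 * y$2 - x$2 * y$1]"

lemma scalar_prod_cross3: "scalar_prod x (cross3 x y) = 0" "scalar_prod y (cross3 x y) = 0"
  by (simp_all add: scalar_prod_3 cross3_def algebra_simps)

lemma cross3_cross3:
  "cross3 (cross3 x y) z = scalar_prod x z *s y - scalar_prod y z *s x"
  by (simp add: vec_eq_iff forall_3 scalar_prod_3 cross3_def algebra_simps)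

lemma cross3_eq_0_imp_parallel:
  fixes x y :: "'a::field^3"
  assumes "cross3 x y = 0" and "x \<noteq> 0"
  shows "\<exists>k. y = k *s x"
proof -
  have c: "x$2 * y$3 = x$3 * y$2" "x$3 * y$1 = x$1 * y$3" "x$1 * y$2 = x$2 * y$1"
    using assms(1) by (simp_all add: cross3_def vec_eq_iff forall_3)
  from assms(2) consider "x$1 \<noteq> 0" | "x$2 \<noteq> 0" | "x$3 \<noteq> 0"
    by (auto simp: vec_eq_iff forall_3)
  then show ?thesis
  proof cases
    case 1
    with c show ?thesis by (intro exI[of _ "y$1 / x$1"]) (auto simp: vec_eq_iff forall_3 field_simps)
  next
    case 2
    with c show ?thesis by (intro exI[of _ "y$2 / x$2"]) (auto simp: vec_eq_iff forall_3 field_simps)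
  next
    case 3
    with c show ?thesis by (intro exI[of _ "y$3 / x$3"]) (auto simp: vec_eq_iff forall_3 field_simps)
  qed
qed

lemma cross3_nonzero:
  fixes x y :: "'a::field^3"
  assumes "\<And>s t. s *s x + t *s y = 0 \<Longrightarrow> s = 0 \<and> t = 0"
  shows "cross3 x y \<noteq> 0"
proof
  assume "cross3 x y = 0"
  moreover have "x \<noteq> 0" using assms[of 1 0] by auto
  ultimately obtain k where "y = k *s x" using cross3_eq_0_imp_parallel by blast
  then have "k *s x + (- 1) *s y = 0" by simp
  then show False using assms by fastforce
qed

lemma orthogonal_pair_imp_parallel_cross3:
  fixes x y z :: "'a::field^3"
  assumes "cross3 x y \<noteq> 0" and "scalar_prod x z = 0" and "scalar_prod y z = 0"
  shows "\<exists>k. z = k *s cross3 x y"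
  using cross3_eq_0_imp_parallel[OF _ assms(1)] assms(2,3) by (simp add: cross3_cross3)

section \<open>Coordinates of PG(4, F)\<close>

lemma forall_5: "(\<forall>i::5. P i) \<longleftrightarrow> P 1 \<and> P 2 \<and> P 3 \<and> P 4 \<and> P 5"
proof -
  have "{1, 2, 3, 4, 5 :: 5} = UNIV"
    by (rule card_subset_eq) simp_all
  then show ?thesis by (metis UNIV_I insert_iff empty_iff)
qed

definition vec5 :: "'a::zero \<Rightarrow> 'a \<Rightarrow> 'a^3 \<Rightarrow> 'a^5" where
  "vec5 s t w = (\<chi> i. if i = 1 then s else if i = 2 then t
     else if i = 3 then w$1 else if i = 4 then w$2 else w$3)"

lemma vec5_eq_iff [simp]: "vec5 s t w = vec5 s' t' w' \<longleftrightarrow> s = s' \<and> t = t' \<and> w = w'"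
  by (simp add: vec5_def vec_eq_iff forall_5 forall_3)

lemma vec5_eq_0_iff [simp]: "vec5 s t w = 0 \<longleftrightarrow> s = 0 \<and> t = 0 \<and> w = 0"
  by (simp add: vec5_def vec_eq_iff forall_5 forall_3)

lemma vec5_add [simp]: "vec5 s t w + vec5 s' t' w' = vec5 (s + s') (t + t') (w + w')"
  by (simp add: vec5_def vec_eq_iff forall_5)

lemma vec5_scale [simp]: "k *s vec5 s t w = vec5 (k * s) (k * t) (k *s w)"
  by (simp add: vec5_def vec_eq_iff forall_5)

lemma vec_linearI:
  fixes g :: "'a::field^'n \<Rightarrow> 'a^'m"
  assumes "\<And>x y. g (x + y) = g x + g y" and "\<And>k x. g (k *s x) = k *s g x"
  shows "Vector_Spaces.linear (*s) (*s) g"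
  using assms by (simp add: Vector_Spaces.linear_iff vec.vector_space_axioms)

lemma finite_vec_UNIV: "finite (UNIV :: 'a set) \<Longrightarrow> finite (UNIV :: ('a^'n) set)"
  by (rule card_ge_0_finite) (simp add: finite_UNIV_card_ge_0)

section \<open>Subspaces of PG(4, F)\<close>

lemma pg_subspace_of_dim_span_singleton:
  assumes "p \<noteq> 0"
  shows "pg_subspace_of_dim 0 (vec.span {p})"
proof -
  have "vec.independent {p}"
    using assms by (simp add: vec.independent_insert vec.independent_empty)
  then show ?thesis
    by (simp add: pg_subspace_of_dim_def vec.subspace_span vec.dim_span_eq_card_independent)
qed

lemma span_pair_iff: "x \<in> vec.span {p, q} \<longleftrightarrow> (\<exists>s t. x = s *s p + t *s q)"
  by (auto simp: vec.span_insert vec.span_singleton diff_eq_eq add.commute)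

lemma pg_subspace_of_dim_span_pair:
  fixes p q :: "'a::field^5"
  assumes "\<And>s t. s *s p + t *s q = 0 \<Longrightarrow> s = 0 \<and> t = 0"
  shows "pg_subspace_of_dim 1 (vec.span {p, q})"
proof -
  have "q \<noteq> 0" and "p \<noteq> q" using assms[of 0 1] assms[of 1 "-1"] by auto
  have "p \<notin> vec.span {q}"
  proof
    assume "p \<in> vec.span {q}"
    then obtain k where "p = k *s q" by (auto simp: vec.span_singleton)
    then have "1 *s p + (- k) *s q = 0" by simp
    then show False using assms by fastforce
  qed
  with \<open>q \<noteq> 0\<close> have "vec.independent {p, q}"
    by (simp add: vec.independent_insert vec.independent_empty)
  with \<open>p \<noteq> q\<close> show ?thesis
    by (simp add: pg_subspace_of_dim_def vec.subspace_span vec.dim_span_eq_card_independent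
        vec.dim_eq_card_independent)
qed

lemma pg_subspace_of_dim_range:
  fixes g :: "'a::field^'n \<Rightarrow> 'a^5"
  assumes "Vector_Spaces.linear (*s) (*s) g" and "inj g"
  shows "pg_subspace_of_dim (CARD('n) - 1) (range g)"
proof -
  interpret g: Vector_Spaces.linear "(*s)" "(*s)" g by fact
  have "vec.dim (range g) = vec.dim (UNIV :: ('a^'n) set)"
    using assms by (intro vec.dim_image_eq) (auto intro: inj_on_subset)
  then show ?thesis
    by (simp add: pg_subspace_of_dim_def g.subspace_image vec.subspace_UNIV card_cart_basis)
qed

lemma pg_skewI:
  "0 \<in> L \<Longrightarrow> 0 \<in> M \<Longrightarrow> (\<And>x. x \<in> L \<Longrightarrow> x \<in> M \<Longrightarrow> x = 0) \<Longrightarrow> pg_skew L M"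
  unfolding pg_skew_def by blast

lemma pg_meet_in_one_pointI:
  "P \<inter> Q = vec.span {p} \<Longrightarrow> p \<noteq> 0 \<Longrightarrow> pg_meet_in_one_point P Q"
  unfolding pg_meet_in_one_point_def by (simp add: pg_subspace_of_dim_span_singleton)

lemma pg_skew_commute: "pg_skew L M \<longleftrightarrow> pg_skew M L"
  by (auto simp: pg_skew_def)

lemma pg_meet_in_one_point_commute: "pg_meet_in_one_point P Q \<longleftrightarrow> pg_meet_in_one_point Q P"
  by (simp add: pg_meet_in_one_point_def Int_commute)

lemma pg_skew_not_subset: "pg4_line L \<Longrightarrow> pg_skew L M \<Longrightarrow> \<not> L \<subseteq> M"
  by (auto simp: pg4_line_def pg_subspace_of_dim_def pg_skew_def Int_absorb2)

lemma pg_meet_in_one_point_not_subset: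
  "pg4_plane P \<Longrightarrow> pg_meet_in_one_point P Q \<Longrightarrow> \<not> P \<subseteq> Q"
  by (auto simp: pg4_plane_def pg_subspace_of_dim_def pg_meet_in_one_point_def Int_absorb2)

lemma inj_on_if_not_subset:
  "(\<And>x y. x \<in> A \<Longrightarrow> y \<in> A \<Longrightarrow> x \<noteq> y \<Longrightarrow> \<not> F x \<subseteq> F y) \<Longrightarrow> inj_on F A"
  by (metis inj_onI order_refl)

definition pg1_points :: "('a::field \<times> 'a) set" where
  "pg1_points = insert (0, 1) (range (Pair 1))"

lemma pg1_points_nonzero: "d \<in> pg1_points \<Longrightarrow> d \<noteq> (0, 0)"
  by (auto simp: pg1_points_def)

lemma pg1_points_det:
  "(d1, d2) \<in> pg1_points \<Longrightarrow> (d1', d2') \<in> pg1_points \<Longrightarrow> (d1, d2) \<noteq> (d1', d2') \<Longrightarrow>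
     d1 * d2' - d2 * d1' \<noteq> 0"
  by (auto simp: pg1_points_def)

lemma finite_pg1_points: "finite (UNIV :: 'a set) \<Longrightarrow> finite (pg1_points :: ('a::field \<times> 'a) set)"
  by (simp add: pg1_points_def)

lemma card_pg1_points:
  "finite (UNIV :: 'a set) \<Longrightarrow> card (pg1_points :: ('a::field \<times> 'a) set) = CARD('a) + 1"
proof -
  assume "finite (UNIV :: 'a set)"
  moreover have "card (range (Pair 1) :: ('a \<times> 'a) set) = CARD('a)"
    by (simp add: card_image inj_on_def)
  ultimately show ?thesis by (simp add: pg1_points_def image_iff)
qed

section \<open>The lines and the planes\<close>

locale pg4_switched_spread =
  fixes K :: "'a::field^3^3" and e f :: "'a^3"
  assumes no_eigenvalue_K: "no_eigenvalue K"
    and e_nonzero: "e \<noteq> 0"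
    and f_notin_span: "f \<notin> vec.span {e, K *v e}"
begin

lemma pencil_eq_0:
  "s *s v + t *s (K *v v) = 0 \<Longrightarrow> v = 0 \<or> s = 0 \<and> t = 0"
  using no_eigenvalue_pencil_eq_0[OF no_eigenvalue_K] by blast

lemma pencil_neq_0: "(d1, d2) \<noteq> (0, 0) \<Longrightarrow> d1 *s e + d2 *s (K *v e) \<noteq> 0"
  using pencil_eq_0[of d1 e d2] e_nonzero by auto

definition spread_line :: "'a^3 \<Rightarrow> ('a^5) set" where
  "spread_line w = vec.span {vec5 1 0 w, vec5 0 1 (K *v w)}"

definition opposite_line :: "'a \<Rightarrow> 'a \<Rightarrow> ('a^5) set" where
  "opposite_line d1 d2 = vec.span {vec5 d1 d2 0, vec5 0 0 (d1 *s e + d2 *s (K *v e))}"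

lemma mem_spread_line: "x \<in> spread_line w \<longleftrightarrow> (\<exists>s t. x = vec5 s t (s *s w + t *s (K *v w)))"
  by (simp add: spread_line_def span_pair_iff)

lemma mem_opposite_line:
  "x \<in> opposite_line d1 d2 \<longleftrightarrow>
     (\<exists>s t. x = vec5 (s * d1) (s * d2) (t *s (d1 *s e + d2 *s (K *v e))))"
  by (simp add: opposite_line_def span_pair_iff)

lemma pg4_line_spread_line: "pg4_line (spread_line w)"
  unfolding pg4_line_def spread_line_def by (rule pg_subspace_of_dim_span_pair) simp

lemma pg4_line_opposite_line:
  assumes "(d1, d2) \<noteq> (0, 0)"
  shows "pg4_line (opposite_line d1 d2)"
  unfolding pg4_line_def opposite_line_def
proof (rule pg_subspace_of_dim_span_pair)
  fix s t assume "s *s vec5 d1 d2 0 + t *s vec5 0 0 (d1 *s e + d2 *s (K *v e)) = 0"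
  then have "s * d1 = 0" "s * d2 = 0" and t: "t *s (d1 *s e + d2 *s (K *v e)) = 0"
    by (simp_all del: vector_ssub_ldistrib)
  moreover have "d1 *s e + d2 *s (K *v e) \<noteq> 0"
    using assms by (rule pencil_neq_0)
  ultimately show "s = 0 \<and> t = 0"
    using assms vec.scale_eq_0_iff by (metis mult_eq_0_iff prod.inject)
qed

lemma spread_line_skew:
  assumes "w \<noteq> v"
  shows "pg_skew (spread_line w) (spread_line v)"
proof (rule pg_skewI)
  fix x assume "x \<in> spread_line w" "x \<in> spread_line v"
  then obtain s t where x: "x = vec5 s t (s *s w + t *s (K *v w))"
    and "s *s w + t *s (K *v w) = s *s v + t *s (K *v v)"
    unfolding mem_spread_line by auto
  then have "s *s (w - v) + t *s (K *v (w - v)) = 0"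
    by (simp add: vec.diff vector_ssub_ldistrib algebra_simps)
  with assms have "s = 0 \<and> t = 0" using pencil_eq_0 by fastforce
  with x show "x = 0" by simp
qed (simp_all add: spread_line_def vec.span_zero)

lemma spread_line_opposite_line_skew:
  assumes w: "w \<notin> vec.span {e}" and d: "(d1, d2) \<noteq> (0, 0)"
  shows "pg_skew (spread_line w) (opposite_line d1 d2)"
proof (rule pg_skewI)
  fix x assume "x \<in> spread_line w" and "x \<in> opposite_line d1 d2"
  then obtain s' t' s t where "x = vec5 s' t' (s' *s w + t' *s (K *v w))"
    and x: "x = vec5 (s * d1) (s * d2) (t *s (d1 *s e + d2 *s (K *v e)))"
    unfolding mem_spread_line mem_opposite_line by blast
  then have "(s * d1) *s w + (s * d2) *s (K *v w) = t *s (d1 *s e + d2 *s (K *v e))"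
    by simp
  then have "d1 *s (s *s w - t *s e) + d2 *s (K *v (s *s w - t *s e)) = 0"
    by (simp add: vec.diff vec.scale algebra_simps)
  with d have st: "s *s w = t *s e" using pencil_eq_0 by fastforce
  have "s = 0"
  proof (rule ccontr)
    assume "s \<noteq> 0"
    with st have "w = (t / s) *s e" by (simp add: vec_eq_iff field_simps)
    with w show False by (auto simp: vec.span_singleton)
  qed
  with st e_nonzero have "t = 0" by simp
  with x \<open>s = 0\<close> show "x = 0" by simp
qed (simp_all add: spread_line_def opposite_line_def vec.span_zero)

lemma opposite_line_skew:
  assumes det: "d1 * d2' - d2 * d1' \<noteq> 0"
  shows "pg_skew (opposite_line d1 d2) (opposite_line d1' d2')"
proof (rule pg_skewI)
  fix x assume "x \<in> opposite_line d1 d2" and "x \<in> opposite_line d1' d2'"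
  then obtain s t s' t' where x: "x = vec5 (s * d1) (s * d2) (t *s (d1 *s e + d2 *s (K *v e)))"
    and "x = vec5 (s' * d1') (s' * d2') (t' *s (d1' *s e + d2' *s (K *v e)))"
    unfolding mem_opposite_line by blast
  then have s: "s * d1 = s' * d1'" "s * d2 = s' * d2'"
    and t: "t *s (d1 *s e + d2 *s (K *v e)) = t' *s (d1' *s e + d2' *s (K *v e))"
    by (simp_all del: vector_ssub_ldistrib)
  from t have "(t * d1 - t' * d1') *s e + (t * d2 - t' * d2') *s (K *v e) = 0"
    by (simp add: algebra_simps)
  then have "t * d1 = t' * d1'" "t * d2 = t' * d2'"
    using pencil_eq_0 e_nonzero by fastforce+
  then have "t * (d1 * d2' - d2 * d1') = 0" by algebra
  moreover from s have "s * (d1 * d2' - d2 * d1') = 0" by algebra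
  ultimately show "x = 0" using x det by simp
qed (simp_all add: opposite_line_def vec.span_zero)

definition dual_point :: "'a^3 \<Rightarrow> 'a^3 \<Rightarrow> 'a^5" where
  "dual_point u y = vec5 (scalar_prod u y) (scalar_prod u (y + K *v y)) y"

definition dual_plane :: "'a^3 \<Rightarrow> ('a^5) set" where
  "dual_plane u = range (dual_point u)"

definition infinite_plane :: "('a^5) set" where
  "infinite_plane = range (\<lambda>y::'a^3. vec5 (y$1) (y$2) (y$3 *s f))"

lemma f_nonzero: "f \<noteq> 0"
  using f_notin_span vec.span_zero by blast

lemma dual_point_scale: "k *s dual_point u y = dual_point u (k *s y)"
  by (simp add: dual_point_def scalar_prod_add_right scalar_prod_scale_right vec.scale
      distrib_left flip: vector_ssub_ldistrib)

lemma dual_point_eq_iff: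
  "dual_point u y = dual_point v y' \<longleftrightarrow>
     y' = y \<and> scalar_prod (u - v) y = 0 \<and> scalar_prod (u - v) (K *v y) = 0"
  by (auto simp: dual_point_def scalar_prod_diff_left scalar_prod_add_right)

lemma pg4_plane_dual_plane: "pg4_plane (dual_plane u)"
proof -
  have "Vector_Spaces.linear (*s) (*s) (dual_point u)"
    by (rule vec_linearI)
      (simp_all add: dual_point_def scalar_prod_add_right scalar_prod_scale_right vec.add vec.scale
        algebra_simps)
  moreover have "inj (dual_point u)"
    by (rule injI) (simp add: dual_point_def)
  ultimately show ?thesis
    unfolding pg4_plane_def dual_plane_def using pg_subspace_of_dim_range by fastforce
qed

lemma pg4_plane_infinite_plane: "pg4_plane infinite_plane"
proof -
  have "Vector_Spaces.linear (*s) (*s) (\<lambda>y::'a^3. vec5 (y$1) (y$2) (y$3 *s f))"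
    by (rule vec_linearI) (simp_all add: algebra_simps)
  moreover have "inj (\<lambda>y::'a^3. vec5 (y$1) (y$2) (y$3 *s f))"
    using f_nonzero by (intro injI) (auto simp: vec_eq_iff[where 'a='a and 'b=3] forall_3)
  ultimately show ?thesis
    unfolding pg4_plane_def infinite_plane_def using pg_subspace_of_dim_range by fastforce
qed

lemma dual_plane_meet:
  assumes "u \<noteq> v"
  shows "pg_meet_in_one_point (dual_plane u) (dual_plane v)"
proof -
  define d where "d = u - v"
  define d' where "d' = transpose K *v d"
  define z where "z = cross3 d d'"
  have "d \<noteq> 0" using assms by (simp add: d_def)
  then have "z \<noteq> 0"
    unfolding z_def d'_def
    using no_eigenvalue_pencil_eq_0[OF no_eigenvalue_transpose[OF no_eigenvalue_K]]
    by (intro cross3_nonzero) blast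
  have orth: "scalar_prod d y = 0 \<and> scalar_prod d (K *v y) = 0 \<longleftrightarrow> (\<exists>k. y = k *s z)" for y
  proof -
    have "scalar_prod d (K *v y) = scalar_prod d' y"
      by (simp only: d'_def scalar_prod_matrix_vector)
    then show ?thesis
      using orthogonal_pair_imp_parallel_cross3[of d d' y] \<open>z \<noteq> 0\<close> scalar_prod_cross3[where x=d and y=d']
      by (auto simp: z_def scalar_prod_scale_right)
  qed
  have meet: "dual_point u y = dual_point v y' \<longleftrightarrow> y' = y \<and> (\<exists>k. y = k *s z)" for y y'
    by (simp add: dual_point_eq_iff orth flip: d_def)
  have "dual_plane u \<inter> dual_plane v = range (\<lambda>k. dual_point u (k *s z))"
    unfolding dual_plane_def by (auto simp: image_iff) (metis meet)+
  also have "\<dots> = vec.span {dual_point u z}"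
    by (simp add: vec.span_singleton dual_point_scale)
  finally show ?thesis
    by (rule pg_meet_in_one_pointI) (use \<open>z \<noteq> 0\<close> in \<open>simp add: dual_point_def\<close>)
qed

lemma mem_infinite_plane: "x \<in> infinite_plane \<longleftrightarrow> (\<exists>r s t. x = vec5 r s (t *s f))"
proof -
  have "vec5 r s (t *s f) \<in> infinite_plane" for r s t
    unfolding infinite_plane_def by (rule range_eqI[of _ _ "vector [r, s, t]"]) simp
  then show ?thesis
    unfolding infinite_plane_def by blast
qed

lemma dual_plane_meet_infinite_plane: "pg_meet_in_one_point (dual_plane u) infinite_plane"
proof (rule pg_meet_in_one_pointI)
  show "dual_plane u \<inter> infinite_plane = vec.span {dual_point u f}"
    by (auto simp: dual_plane_def mem_infinite_plane vec.span_singleton dual_point_scale)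
      (auto simp: dual_point_def)
  show "dual_point u f \<noteq> 0"
    using f_nonzero by (simp add: dual_point_def)
qed

lemma spread_line_not_subset_dual_plane: "\<not> spread_line w \<subseteq> dual_plane u"
proof
  assume sub: "spread_line w \<subseteq> dual_plane u"
  have "vec5 1 0 w \<in> spread_line w" "vec5 0 1 (K *v w) \<in> spread_line w"
    by (auto simp: spread_line_def vec.span_base)
  with sub have "vec5 1 0 w \<in> range (dual_point u)" "vec5 0 1 (K *v w) \<in> range (dual_point u)"
    by (auto simp: dual_plane_def)
  then have "scalar_prod u w = 1" "scalar_prod u (w + K *v w) = 0" "scalar_prod u (K *v w) = 0"
    by (auto simp: dual_point_def)
  then show False by (simp add: scalar_prod_add_right)
qed

lemma spread_line_not_subset_infinite_plane:
  assumes "w \<noteq> 0"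
  shows "\<not> spread_line w \<subseteq> infinite_plane"
proof
  assume sub: "spread_line w \<subseteq> infinite_plane"
  have "vec5 1 0 w \<in> spread_line w" "vec5 0 1 (K *v w) \<in> spread_line w"
    by (auto simp: spread_line_def vec.span_base)
  with sub have "vec5 1 0 w \<in> infinite_plane" "vec5 0 1 (K *v w) \<in> infinite_plane"
    by auto
  then obtain t t' where w: "w = t *s f" and Kw: "K *v w = t' *s f"
    by (simp only: mem_infinite_plane vec5_eq_iff) blast
  with assms have "t \<noteq> 0" by auto
  with w Kw have "K *v w = (t' / t) *s w" by simp
  with assms no_eigenvalue_K show False by (auto simp: no_eigenvalue_def)
qed

lemma opposite_line_not_subset_dual_plane:
  assumes "(d1, d2) \<noteq> (0, 0)"
  shows "\<not> opposite_line d1 d2 \<subseteq> dual_plane u"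
proof
  assume "opposite_line d1 d2 \<subseteq> dual_plane u"
  moreover have "vec5 d1 d2 0 \<in> opposite_line d1 d2"
    by (simp add: opposite_line_def vec.span_base)
  ultimately have "vec5 d1 d2 0 \<in> range (dual_point u)"
    by (auto simp: dual_plane_def)
  with assms show False by (auto simp: dual_point_def scalar_prod_def)
qed

lemma opposite_line_not_subset_infinite_plane:
  assumes "(d1, d2) \<noteq> (0, 0)"
  shows "\<not> opposite_line d1 d2 \<subseteq> infinite_plane"
proof
  define g where "g = d1 *s e + d2 *s (K *v e)"
  assume "opposite_line d1 d2 \<subseteq> infinite_plane"
  moreover have "vec5 0 0 g \<in> opposite_line d1 d2"
    by (simp add: opposite_line_def g_def vec.span_base)
  ultimately have "vec5 0 0 g \<in> infinite_plane" by auto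
  then obtain t where "g = t *s f"
    by (simp only: mem_infinite_plane vec5_eq_iff) blast
  moreover have "g \<noteq> 0"
    unfolding g_def using assms by (rule pencil_neq_0)
  ultimately have "f = (1 / t) *s g" by auto
  then have "f \<in> vec.span {e, K *v e}"
    by (auto simp: span_pair_iff g_def)
  with f_notin_span show False ..
qed

definition line_family :: "('a^5) set set" where
  "line_family = spread_line ` (- vec.span {e}) \<union> case_prod opposite_line ` pg1_points"

definition plane_family :: "('a^5) set set" where
  "plane_family = insert infinite_plane (range dual_plane)"

lemma line_familyE:
  assumes "L \<in> line_family"
  obtains (spread) w where "w \<notin> vec.span {e}" and "L = spread_line w"
    | (opposite) d1 d2 where "(d1, d2) \<in> pg1_points" and "L = opposite_line d1 d2"
  using assms unfolding line_family_def by auto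

lemma plane_familyE:
  assumes "P \<in> plane_family"
  obtains (infinite) "P = infinite_plane" | (dual) u where "P = dual_plane u"
  using assms unfolding plane_family_def by auto

lemma line_family_lines: "L \<in> line_family \<Longrightarrow> pg4_line L"
  by (erule line_familyE)
    (use pg4_line_spread_line pg4_line_opposite_line pg1_points_nonzero in blast)+

lemma line_family_skew:
  assumes L: "L \<in> line_family" and M: "M \<in> line_family" and "L \<noteq> M"
  shows "pg_skew L M"
  using L
proof (cases rule: line_familyE)
  case (spread w)
  from M show ?thesis
  proof (cases rule: line_familyE)
    case (spread v)
    with \<open>L = spread_line w\<close> \<open>L \<noteq> M\<close> show ?thesis by (auto intro: spread_line_skew)
  next
    case (opposite d1 d2)
    with spread show ?thesis using spread_line_opposite_line_skew pg1_points_nonzero by blast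
  qed
next
  case (opposite d1 d2)
  from M show ?thesis
  proof (cases rule: line_familyE)
    case (spread v)
    with opposite show ?thesis
      using spread_line_opposite_line_skew pg1_points_nonzero pg_skew_commute by blast
  next
    case (opposite d1' d2')
    with \<open>L = opposite_line d1 d2\<close> \<open>L \<noteq> M\<close> have "(d1, d2) \<noteq> (d1', d2')" by auto
    with opposite \<open>L = opposite_line d1 d2\<close> \<open>(d1, d2) \<in> pg1_points\<close> show ?thesis
      using opposite_line_skew pg1_points_det by metis
  qed
qed

lemma plane_family_planes: "P \<in> plane_family \<Longrightarrow> pg4_plane P"
  by (erule plane_familyE) (simp_all add: pg4_plane_dual_plane pg4_plane_infinite_plane)

lemma plane_family_meet:
  assumes P: "P \<in> plane_family" and Q: "Q \<in> plane_family" and "P \<noteq> Q"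
  shows "pg_meet_in_one_point P Q"
  using P Q \<open>P \<noteq> Q\<close>
  by (elim plane_familyE) (auto intro: dual_plane_meet dual_plane_meet_infinite_plane
      pg_meet_in_one_point_commute[THEN iffD1])

lemma line_family_not_subset_plane:
  assumes L: "L \<in> line_family" and P: "P \<in> plane_family"
  shows "\<not> L \<subseteq> P"
  using L P
  by (elim line_familyE plane_familyE)
    (use spread_line_not_subset_dual_plane spread_line_not_subset_infinite_plane
      opposite_line_not_subset_dual_plane opposite_line_not_subset_infinite_plane
      pg1_points_nonzero vec.span_zero in metis)+

lemma inj_on_spread_line: "inj_on spread_line (- vec.span {e})"
  by (rule inj_on_if_not_subset)
    (simp add: pg_skew_not_subset pg4_line_spread_line spread_line_skew)

lemma inj_on_opposite_line: "inj_on (case_prod opposite_line) pg1_points"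
proof (rule inj_on_if_not_subset)
  fix d d' :: "'a \<times> 'a" assume "d \<in> pg1_points" "d' \<in> pg1_points" "d \<noteq> d'"
  moreover obtain d1 d2 d1' d2' where d: "d = (d1, d2)" "d' = (d1', d2')" by fastforce
  ultimately have d12: "(d1, d2) \<in> pg1_points" "(d1', d2') \<in> pg1_points"
    "(d1, d2) \<noteq> (d1', d2')"
    by simp_all
  then have "pg_skew (opposite_line d1 d2) (opposite_line d1' d2')"
    by (rule opposite_line_skew[OF pg1_points_det])
  moreover have "pg4_line (opposite_line d1 d2)"
    using d12 by (intro pg4_line_opposite_line pg1_points_nonzero)
  ultimately show "\<not> case_prod opposite_line d \<subseteq> case_prod opposite_line d'"
    by (simp add: d pg_skew_not_subset)
qed

lemma spread_line_neq_opposite_line: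
  "w \<notin> vec.span {e} \<Longrightarrow> (d1, d2) \<noteq> (0, 0) \<Longrightarrow> spread_line w \<noteq> opposite_line d1 d2"
  using spread_line_opposite_line_skew pg_skew_not_subset pg4_line_spread_line by blast

lemma card_line_family:
  assumes fin: "finite (UNIV :: 'a set)"
  shows "card line_family = CARD('a)^3 + 1"
proof -
  have "spread_line ` (- vec.span {e}) \<inter> case_prod opposite_line ` pg1_points = {}"
  proof (rule Int_emptyI)
    fix L assume "L \<in> spread_line ` (- vec.span {e})" "L \<in> case_prod opposite_line ` pg1_points"
    then obtain w d1 d2 where "w \<notin> vec.span {e}" "(d1, d2) \<in> pg1_points"
      and "L = spread_line w" "L = opposite_line d1 d2" by auto
    then show False using spread_line_neq_opposite_line pg1_points_nonzero by metis
  qed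
  moreover have fin_span: "finite (vec.span {e})" and "finite (- vec.span {e})"
    by (rule rev_finite_subset[OF finite_vec_UNIV[OF fin]], simp)+
  ultimately have "card line_family = card (- vec.span {e}) + card (pg1_points :: ('a \<times> 'a) set)"
    unfolding line_family_def using finite_pg1_points[OF fin]
    by (simp add: card_Un_disjoint card_image inj_on_spread_line inj_on_opposite_line)
  moreover have "card (vec.span {e}) = CARD('a)"
    using e_nonzero by (simp add: vec.span_singleton card_image inj_on_def)
  then have "card (- vec.span {e}) = CARD('a)^3 - CARD('a)"
    using fin_span by (simp add: Compl_eq_Diff_UNIV card_Diff_subset)
  ultimately show ?thesis
    using card_pg1_points[OF fin] finite_UNIV_card_ge_0[OF fin] self_le_power[of "CARD('a)" 3]
    by simp
qed

lemma card_plane_family: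
  assumes "finite (UNIV :: 'a set)"
  shows "card plane_family = CARD('a)^3 + 1"
proof -
  have "inj dual_plane"
    by (rule inj_on_if_not_subset)
      (simp add: dual_plane_meet pg_meet_in_one_point_not_subset pg4_plane_dual_plane)
  moreover have "infinite_plane \<notin> range dual_plane"
    using pg_meet_in_one_point_not_subset[OF pg4_plane_dual_plane dual_plane_meet_infinite_plane]
    by auto
  moreover have "finite (range dual_plane)"
    using finite_vec_UNIV[OF assms] by (rule finite_imageI)
  ultimately show ?thesis
    unfolding plane_family_def by (simp add: card_image)
qed

end

theorem theorem2p5:
  fixes q :: nat
  assumes "\<exists>p k. prime p \<and> odd p \<and> k > 0 \<and> q = p ^ k"
    and "CARD('a::{field, finite}) = q"
  shows "\<exists>(\<LL> :: ('a ^ 5) set set) (\<PP> :: ('a ^ 5) set set).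
           finite \<LL> \<and> card \<LL> = q ^ 3 + 1 \<and> (\<forall>L\<in>\<LL>. pg4_line L) \<and>
           (\<forall>L\<in>\<LL>. \<forall>M\<in>\<LL>. L \<noteq> M \<longrightarrow> pg_skew L M) \<and>
           finite \<PP> \<and> card \<PP> = q ^ 3 + 1 \<and> (\<forall>P\<in>\<PP>. pg4_plane P) \<and>
           (\<forall>P\<in>\<PP>. \<forall>Q\<in>\<PP>. P \<noteq> Q \<longrightarrow> pg_meet_in_one_point P Q) \<and>
           (\<forall>L\<in>\<LL>. \<forall>P\<in>\<PP>. \<not> L \<subseteq> P)"
proof -
  obtain a b c :: 'a where "\<forall>r. r^3 + a * r^2 + b * r + c \<noteq> 0"
    using finite_field_rootless_cubic by blast
  then interpret pg4_switched_spread "companion3 a b c" "axis 1 1" "axis 3 1"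
    by unfold_locales
      (simp_all add: no_eigenvalue_companion3 span_pair_iff companion3_mult vec_eq_iff forall_3
        axis_def)
  show ?thesis
    using assms(2) card_line_family card_plane_family line_family_lines line_family_skew
      plane_family_planes plane_family_meet line_family_not_subset_plane
    by (intro exI[of _ line_family] exI[of _ plane_family]) (simp add: card_ge_0_finite)
qed

end
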